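(* Let $C\subseteq\mathbb F_2^n$ be a classical linear code with dual code $C^\perp$, and let $\Gamma\subseteq 2^{[n]}$ be a set of channel supports. Let $\hat\Gamma=\{a\neq\emptyset: a\subseteq\gamma \text{ for some }\gamma\in\Gamma\}$ and let $D$ be the $|C^\perp\setminus\{0\}|\times|\hat\Gamma|$ real matrix with rows indexed by $s\in C^\perp\setminus\{0\}$, columns indexed by $a\in\hat\Gamma$, and entries $D[s,a]=1$ if $a\subseteq s$ and $D[s,a]=0$ otherwise. Then $D$ has full rank (rank equal to $|\hat\Gamma|$) if and only if $\gamma_1\cup\gamma_2\in\Delta^{D}$ for all $\gamma_1,\gamma_2\in\Gamma$.
   Context: A classical code $C$ is a subspace of $\mathbb F_2^n$ with parity check matrix $H$ whose rows span $C^\perp=\{a\in\mathbb F_2^n: a\cdot c=0\ \forall c\in C\}$; the syndrome of $e\in\mathbb F_2^n$ is $\mathrm{syn}(e)=He$. Vectors in $\mathbb F_2^n$ are identified with their support sets in $[n]$ (so $a\subseteq s$ means $\mathrm{supp}(a)\subseteq\mathrm{supp}(s)$). Define $\Delta^{D}=\{\gamma\subseteq[n]: \mathrm{syn}(e)\neq0 \text{ for all nonzero } e \text{ with } \mathrm{supp}(e)\subseteq\gamma\}$. *)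

theory Defs
  imports Main "Jordan_Normal_Form.DL_Rank"
begin

text \<open>Vectors of F_2^n are identified with their supports, i.e. subsets of {..<n}.
  Addition is symmetric difference, the standard inner product a.b is the parity
  of card (a \<inter> b).\<close>

definition f2_add :: "nat set \<Rightarrow> nat set \<Rightarrow> nat set" where
  "f2_add x y = (x - y) \<union> (y - x)"

definition f2_dot_odd :: "nat set \<Rightarrow> nat set \<Rightarrow> bool" where
  "f2_dot_odd a b = odd (card (a \<inter> b))"

definition linear_code :: "nat \<Rightarrow> nat set set \<Rightarrow> bool" where
  "linear_code n C \<longleftrightarrow> C \<subseteq> Pow {..<n} \<and> {} \<in> C \<and> (\<forall>x\<in>C. \<forall>y\<in>C. f2_add x y \<in> C)"

definition dual_code :: "nat \<Rightarrow> nat set set \<Rightarrow> nat set set" where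
  "dual_code n C = {a \<in> Pow {..<n}. \<forall>c\<in>C. \<not> f2_dot_odd a c}"

definition f2_sum :: "nat set set \<Rightarrow> nat set" where
  "f2_sum T = {i. odd (card {t \<in> T. i \<in> t})}"

definition f2_span :: "nat set set \<Rightarrow> nat set set" where
  "f2_span S = {f2_sum T | T. T \<subseteq> S \<and> finite T}"

text \<open>Syndrome w.r.t. a parity check matrix H given by its list of rows;
  the syndrome He is the list of inner products of e with the rows.\<close>
definition syn :: "nat set list \<Rightarrow> nat set \<Rightarrow> bool list" where
  "syn H e = map (\<lambda>h. f2_dot_odd h e) H"

definition is_parity_check :: "nat \<Rightarrow> nat set set \<Rightarrow> nat set list \<Rightarrow> bool" where
  "is_parity_check n C H \<longleftrightarrow> set H \<subseteq> Pow {..<n} \<and> f2_span (set H) = dual_code n C"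

definition DeltaD :: "nat \<Rightarrow> nat set list \<Rightarrow> nat set set" where
  "DeltaD n H = {\<gamma>. \<gamma> \<subseteq> {..<n} \<and>
      (\<forall>e. e \<noteq> {} \<and> e \<subseteq> \<gamma> \<longrightarrow> syn H e \<noteq> replicate (length H) False)}"

definition Gamma_hat :: "nat set set \<Rightarrow> nat set set" where
  "Gamma_hat \<Gamma> = {a. a \<noteq> {} \<and> (\<exists>\<gamma>\<in>\<Gamma>. a \<subseteq> \<gamma>)}"

text \<open>A fixed enumeration (without repetitions) of a finite set; used to index
  rows and columns of a matrix. The rank does not depend on this choice.\<close>
definition enum_set :: "'a set \<Rightarrow> 'a list" where
  "enum_set S = (SOME xs. set xs = S \<and> distinct xs)"

definition D_matrix :: "nat \<Rightarrow> nat set set \<Rightarrow> nat set set \<Rightarrow> real mat" where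
  "D_matrix n C \<Gamma> =
     (let rs = enum_set (dual_code n C - {{}}); cs = enum_set (Gamma_hat \<Gamma>)
      in mat (length rs) (length cs) (\<lambda>(i, j). if cs ! j \<subseteq> rs ! i then 1 else 0))"

definition real_mat_rank :: "real mat \<Rightarrow> nat" where
  "real_mat_rank A = vec_space.rank (dim_row A) A"

end

theory Submission
  imports Defs
begin

(* Write \<chi>_b(s) = (-1)^|b \<inter> s| (f2_char) for the characters of F_2^n. D has full rank iff
   the functions s \<mapsto> [a \<subseteq> s], a \<in> \<Gamma>_hat, are linearly independent on C^perp. Since
   2^|a| [a \<subseteq> s] = \<Sum>_{b \<subseteq> a} (-1)^|b| \<chi>_b(s), these functions live in the span of the
   characters \<chi>_b with b inside some channel support.

   If every union \<gamma>1 \<union> \<gamma>2 is in \<Delta>^D, then b + b' is never a nonzero word orthogonal to C^perp,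
   so these characters are pairwise distinct on the group C^perp and hence orthogonal there.
   Pairing a kernel vector f with \<chi>_a0, for a0 inclusion-maximal with f a0 \<noteq> 0, leaves only
   the multiple |C^perp| (-1)^|a0| / 2^|a0| of f a0, a contradiction.

   Conversely, a nonzero e \<subseteq> \<gamma>1 \<union> \<gamma>2 with zero syndrome splits as e1 + e2 with e_i \<subseteq> \<gamma>_i,
   and \<chi>_e1 = \<chi>_e2 on C^perp. As \<chi>_e'(s) = \<Sum>_{b \<subseteq> e'} (-2)^|b| [b \<subseteq> s], the difference
   of these two expansions is a nonzero kernel vector of D. *)

lemma kernel_nonzero_if_cols_not_distinct:
  fixes A :: "'a::field mat"
  assumes A: "A \<in> carrier_mat nr nc" and "\<not> distinct (cols A)"
  obtains v where "v \<in> carrier_vec nc" "v \<noteq> 0\<^sub>v nc" "A *\<^sub>v v = 0\<^sub>v nr"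
proof -
  obtain i j where ij: "i < nc" "j < nc" "i \<noteq> j" "col A i = col A j"
    using assms by (auto simp: distinct_conv_nth)
  define v :: "'a vec" where "v = unit_vec nc i - unit_vec nc j"
  have "v $ i = 1"
    using ij by (simp add: v_def)
  then have "v \<noteq> 0\<^sub>v nc"
    using ij(1) by auto
  moreover have "A *\<^sub>v v = 0\<^sub>v nr"
  proof (rule eq_vecI)
    fix r
    assume "r < dim_vec (0\<^sub>v nr :: 'a vec)"
    then have r: "r < nr"
      by simp
    have "(A *\<^sub>v v) $ r = row A r \<bullet> unit_vec nc i - row A r \<bullet> unit_vec nc j"
      using A r by (simp add: v_def, intro scalar_prod_minus_distrib[where n = nc]) auto
    also have "\<dots> = col A i $ r - col A j $ r"
      using A r ij(1,2) by simp
    also have "\<dots> = 0"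
      using ij(4) by simp
    finally show "(A *\<^sub>v v) $ r = 0\<^sub>v nr $ r"
      using r by simp
  qed (use A in simp)
  moreover have "v \<in> carrier_vec nc"
    by (simp add: v_def)
  ultimately show thesis
    using that by blast
qed

lemma rank_less_if_cols_not_distinct:
  fixes A :: "'a::field mat"
  assumes A: "A \<in> carrier_mat nr nc" and "\<not> distinct (cols A)"
  shows "vec_space.rank nr A < nc"
proof -
  interpret vec_space "TYPE('a)" nr .
  obtain S where S: "maximal S (\<lambda>T. T \<subseteq> set (cols A) \<and> lin_indpt T)"
    using maximal_exists[of "\<lambda>T. T \<subseteq> set (cols A) \<and> lin_indpt T" "card (set (cols A))" "{}"]
    by (meson List.finite_set card_mono empty_iff empty_subsetI finite_lin_indpt2 rev_finite_subset)
  have "card S \<le> card (set (cols A))"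
    using S by (simp add: card_mono maximal_def)
  also have "\<dots> < length (cols A)"
    using assms card_length[of "cols A"] card_distinct[of "cols A"] by linarith
  finally show ?thesis
    using rank_card_indpt[OF A S] A by simp
qed

lemma full_rank_iff_kernel_trivial:
  fixes A :: "'a::field mat"
  assumes A: "A \<in> carrier_mat nr nc"
  shows "vec_space.rank nr A = nc \<longleftrightarrow> (\<forall>v\<in>carrier_vec nc. A *\<^sub>v v = 0\<^sub>v nr \<longrightarrow> v = 0\<^sub>v nc)"
proof (cases "distinct (cols A)")
  case True
  interpret vec_space "TYPE('a)" nr .
  have "vec_space.rank nr A = nc \<longleftrightarrow> lin_indpt (set (cols A))"
    using full_rank_lin_indpt[OF A _ True] lin_indpt_full_rank[OF A True] by blast
  also have "\<dots> \<longleftrightarrow> (\<forall>v\<in>carrier_vec nc. A *\<^sub>v v = 0\<^sub>v nr \<longrightarrow> v = 0\<^sub>v nc)"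
    using lin_depI[OF A _ _ _ True] lin_depE[OF A _ True] by blast
  finally show ?thesis .
next
  case False
  then show ?thesis
    using rank_less_if_cols_not_distinct[OF A] kernel_nonzero_if_cols_not_distinct[OF A]
    by (metis less_irrefl)
qed

lemma full_rank_mat_of_lists_iff:
  fixes M :: "'r \<Rightarrow> 'c \<Rightarrow> 'a::field"
  assumes cs: "distinct cs"
  shows "vec_space.rank (length rs) (mat (length rs) (length cs) (\<lambda>(i, j). M (rs ! i) (cs ! j)))
           = length cs \<longleftrightarrow>
         (\<forall>f. (\<forall>r\<in>set rs. (\<Sum>c\<in>set cs. M r c * f c) = 0) \<longrightarrow> (\<forall>c\<in>set cs. f c = 0))"
proof -
  define A where "A = mat (length rs) (length cs) (\<lambda>(i, j). M (rs ! i) (cs ! j))"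
  have A: "A \<in> carrier_mat (length rs) (length cs)"
    by (simp add: A_def)
  have mult: "A *\<^sub>v vec (length cs) (\<lambda>j. f (cs ! j))
      = vec (length rs) (\<lambda>i. \<Sum>c\<in>set cs. M (rs ! i) c * f c)" for f
    by (rule eq_vecI)
      (simp_all add: A_def scalar_prod_def sum.distinct_set_conv_list[OF cs] sum_list_sum_nth)
  have vec_of_fun: "v = vec (length cs) (\<lambda>j. v $ find_first (cs ! j) cs)"
    if "v \<in> carrier_vec (length cs)" for v :: "'a vec"
    using that find_first_unique[OF cs] by auto
  have "(\<forall>v\<in>carrier_vec (length cs). A *\<^sub>v v = 0\<^sub>v (length rs) \<longrightarrow> v = 0\<^sub>v (length cs)) \<longleftrightarrow>
        (\<forall>f. (\<forall>r\<in>set rs. (\<Sum>c\<in>set cs. M r c * f c) = 0) \<longrightarrow> (\<forall>c\<in>set cs. f c = 0))"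
  proof (intro iffI allI impI ballI)
    fix f c
    assume ker: "\<forall>v\<in>carrier_vec (length cs). A *\<^sub>v v = 0\<^sub>v (length rs) \<longrightarrow> v = 0\<^sub>v (length cs)"
      and f: "\<forall>r\<in>set rs. (\<Sum>c\<in>set cs. M r c * f c) = 0" and c: "c \<in> set cs"
    have "A *\<^sub>v vec (length cs) (\<lambda>j. f (cs ! j)) = 0\<^sub>v (length rs)"
      using f by (auto simp: mult vec_eq_iff)
    then have "vec (length cs) (\<lambda>j. f (cs ! j)) = 0\<^sub>v (length cs)"
      using ker by simp
    then show "f c = 0"
      using c by (metis in_set_conv_nth index_vec index_zero_vec(1))
  next
    fix v :: "'a vec"
    assume indep: "\<forall>f. (\<forall>r\<in>set rs. (\<Sum>c\<in>set cs. M r c * f c) = 0) \<longrightarrow> (\<forall>c\<in>set cs. f c = 0)"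
      and v: "v \<in> carrier_vec (length cs)" and Av: "A *\<^sub>v v = 0\<^sub>v (length rs)"
    define f where "f c = v $ find_first c cs" for c
    have "\<forall>r\<in>set rs. (\<Sum>c\<in>set cs. M r c * f c) = 0"
      using Av mult[of f] vec_of_fun[OF v] by (auto simp: f_def in_set_conv_nth vec_eq_iff)
    then have "\<forall>c\<in>set cs. f c = 0"
      using spec[OF indep, of f] by blast
    then show "v = 0\<^sub>v (length cs)"
      using vec_of_fun[OF v] by (auto simp: f_def vec_eq_iff)
  qed
  then show ?thesis
    using full_rank_iff_kernel_trivial[OF A] by (simp add: A_def)
qed

definition f2_char :: "nat set \<Rightarrow> nat set \<Rightarrow> real" where
  "f2_char a b = (-1) ^ card (a \<inter> b)"

lemma f2_char_commute: "f2_char a b = f2_char b a"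
  by (simp add: f2_char_def Int_commute)

lemma f2_char_eq: "f2_char a b = (if f2_dot_odd a b then -1 else 1)"
  by (simp add: f2_char_def f2_dot_odd_def)

lemma f2_char_eq_1_iff: "f2_char a b = 1 \<longleftrightarrow> \<not> f2_dot_odd a b"
  by (simp add: f2_char_eq)

lemma f2_dot_odd_commute: "f2_dot_odd a b = f2_dot_odd b a"
  by (simp add: f2_dot_odd_def Int_commute)

lemma f2_add_self [simp]: "f2_add x x = {}"
  by (simp add: f2_add_def)

lemma f2_add_eq_empty_iff: "f2_add x y = {} \<longleftrightarrow> x = y"
  by (auto simp: f2_add_def)

lemma f2_add_f2_add: "f2_add a (f2_add a s) = s"
  by (auto simp: f2_add_def)

lemma f2_char_f2_add:
  assumes "finite (x \<inter> s)" "finite (y \<inter> s)"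
  shows "f2_char (f2_add x y) s = f2_char x s * f2_char y s"
proof -
  define X Y where "X = x \<inter> s" and "Y = y \<inter> s"
  have "f2_add x y \<inter> s = (X \<union> Y) - (X \<inter> Y)"
    by (auto simp: X_def Y_def f2_add_def)
  moreover have "card (X \<inter> Y) \<le> card (X \<union> Y)"
    using assms by (intro card_mono) (auto simp: X_def Y_def)
  then have "card ((X \<union> Y) - (X \<inter> Y)) + card (X \<inter> Y) = card (X \<union> Y)"
    using assms by (subst card_Diff_subset) (auto simp: X_def Y_def)
  moreover have "card X + card Y = card (X \<union> Y) + card (X \<inter> Y)"
    using assms by (intro card_Un_Int) (simp_all add: X_def Y_def)
  ultimately have "card X + card Y = card (f2_add x y \<inter> s) + 2 * card (X \<inter> Y)"
    by simp
  then have "f2_char x s * f2_char y s = f2_char (f2_add x y) s * ((-1) ^ 2) ^ card (X \<inter> Y)"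
    unfolding f2_char_def X_def Y_def by (metis power_add power_mult)
  then show ?thesis
    by simp
qed

lemma f2_sum_insert:
  assumes "t \<notin> T" "finite T"
  shows "f2_sum (insert t T) = f2_add t (f2_sum T)"
proof -
  have "card {u \<in> insert t T. i \<in> u} = (if i \<in> t then Suc (card {u \<in> T. i \<in> u}) else card {u \<in> T. i \<in> u})"
    for i
  proof -
    have "{u \<in> insert t T. i \<in> u} = (if i \<in> t then insert t {u \<in> T. i \<in> u} else {u \<in> T. i \<in> u})"
      by auto
    then show ?thesis
      using assms by simp
  qed
  then show ?thesis
    by (auto simp: f2_sum_def f2_add_def)
qed

lemma f2_sum_singleton: "f2_sum {h} = h"
proof -
  have "{t \<in> {h}. i \<in> t} = (if i \<in> h then {h} else {})" for i
    by auto
  then show ?thesis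
    by (auto simp: f2_sum_def)
qed

lemma f2_char_f2_sum:
  assumes "finite T" "finite e"
  shows "f2_char (f2_sum T) e = (\<Prod>t\<in>T. f2_char t e)"
  using assms(1)
proof (induction T rule: finite_induct)
  case empty
  then show ?case
    by (simp add: f2_sum_def f2_char_def)
next
  case (insert t T)
  then show ?case
    using assms(2) by (simp add: f2_sum_insert f2_char_f2_add)
qed

lemma dual_code_subset_Pow: "dual_code n C \<subseteq> Pow {..<n}"
  by (auto simp: dual_code_def)

lemma finite_dual_code_member: "a \<in> dual_code n C \<Longrightarrow> finite a"
  using dual_code_subset_Pow finite_subset[of a "{..<n}"] by blast

lemma dual_code_antimono: "C \<subseteq> C' \<Longrightarrow> dual_code n C' \<subseteq> dual_code n C"
  by (auto simp: dual_code_def)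

lemma dual_code_f2_span: "dual_code n (f2_span S) = dual_code n S"
proof
  have "S \<subseteq> f2_span S"
  proof
    fix s
    assume "s \<in> S"
    then show "s \<in> f2_span S"
      unfolding f2_span_def by (intro CollectI exI[of _ "{s}"]) (simp add: f2_sum_singleton)
  qed
  then show "dual_code n (f2_span S) \<subseteq> dual_code n S"
    by (rule dual_code_antimono)
next
  show "dual_code n S \<subseteq> dual_code n (f2_span S)"
  proof
    fix a
    assume a: "a \<in> dual_code n S"
    then have "finite a"
      by (rule finite_dual_code_member)
    have "f2_char s a = 1" if "s \<in> f2_span S" for s
    proof -
      obtain T where T: "s = f2_sum T" "T \<subseteq> S" "finite T"
        using \<open>s \<in> f2_span S\<close> by (auto simp: f2_span_def)
      have "\<And>t. t \<in> T \<Longrightarrow> f2_char t a = 1"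
        using a T(2) by (auto simp: dual_code_def f2_char_eq_1_iff f2_dot_odd_commute)
      then show ?thesis
        using f2_char_f2_sum[OF T(3) \<open>finite a\<close>] T(1) by simp
    qed
    then show "a \<in> dual_code n (f2_span S)"
      using a by (auto simp: dual_code_def f2_char_eq_1_iff f2_dot_odd_commute)
  qed
qed

lemma linear_code_dual_code: "linear_code n (dual_code n C)"
proof -
  have "f2_add x y \<in> dual_code n C" if "x \<in> dual_code n C" "y \<in> dual_code n C" for x y
  proof -
    have "finite x" "finite y"
      using that by (simp_all add: finite_dual_code_member)
    then have "f2_char (f2_add x y) c = 1" if "c \<in> C" for c
      using \<open>x \<in> dual_code n C\<close> \<open>y \<in> dual_code n C\<close> that
      by (simp add: f2_char_f2_add) (auto simp: dual_code_def f2_char_eq)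
    moreover have "f2_add x y \<subseteq> {..<n}"
      using that dual_code_subset_Pow by (auto simp: f2_add_def)
    ultimately show ?thesis
      by (auto simp: dual_code_def f2_char_eq_1_iff)
  qed
  then show ?thesis
    by (auto simp: linear_code_def dual_code_def f2_dot_odd_def)
qed

lemma empty_in_dual_code [simp]: "{} \<in> dual_code n C"
  by (simp add: dual_code_def f2_dot_odd_def)

lemma finite_linear_code: "linear_code n D \<Longrightarrow> finite D"
  unfolding linear_code_def by (meson finite_Pow_iff finite_lessThan finite_subset)

lemma f2_char_eq_if_f2_add_in_dual_code:
  assumes "finite x" "finite y" "f2_add x y \<in> dual_code n D" "s \<in> D"
  shows "f2_char x s = f2_char y s"
proof -
  have "f2_char x s * f2_char y s = 1"
    using assms by (simp add: f2_char_f2_add[symmetric] dual_code_def f2_char_eq_1_iff)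
  then show ?thesis
    by (auto simp: f2_char_eq split: if_splits)
qed

lemma DeltaD_iff:
  "\<gamma> \<in> DeltaD n H \<longleftrightarrow> \<gamma> \<subseteq> {..<n} \<and> (\<forall>e\<in>dual_code n (set H). e \<subseteq> \<gamma> \<longrightarrow> e = {})"
proof -
  have "syn H e = replicate (length H) False \<longleftrightarrow> (\<forall>h\<in>set H. \<not> f2_dot_odd e h)" for e
    unfolding syn_def f2_dot_odd_def by (induction H) (auto simp: Int_commute)
  then have syn_zero: "syn H e = replicate (length H) False \<longleftrightarrow> e \<in> dual_code n (set H)"
    if "e \<subseteq> {..<n}" for e
    using that by (simp add: dual_code_def)
  show ?thesis
  proof (cases "\<gamma> \<subseteq> {..<n}")
    case True
    then show ?thesis
      using syn_zero[OF subset_trans] by (auto simp: DeltaD_def)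
  next
    case False
    then show ?thesis
      by (simp add: DeltaD_def)
  qed
qed

lemma sum_f2_char_linear_code:
  assumes D: "linear_code n D" and t: "t \<subseteq> {..<n}"
  shows "(\<Sum>s\<in>D. f2_char t s) = (if t \<in> dual_code n D then real (card D) else 0)"
proof (cases "t \<in> dual_code n D")
  case True
  then show ?thesis
    by (simp add: dual_code_def f2_char_eq)
next
  case False
  then obtain s0 where s0: "s0 \<in> D" "f2_dot_odd t s0"
    using t by (auto simp: dual_code_def)
  have closed: "f2_add s0 s \<in> D" if "s \<in> D" for s
    using D s0(1) that by (simp add: linear_code_def)
  have "finite t"
    using t finite_subset by blast
  have "(\<Sum>s\<in>D. f2_char t s) = (\<Sum>s\<in>D. f2_char t (f2_add s0 s))"
    by (rule sum.reindex_bij_witness[of _ "f2_add s0" "f2_add s0"]) (auto simp: closed f2_add_f2_add)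
  also have "\<dots> = (\<Sum>s\<in>D. - f2_char t s)"
  proof (rule sum.cong)
    fix s
    have "f2_char t (f2_add s0 s) = f2_char t s0 * f2_char t s"
      using \<open>finite t\<close> by (simp add: f2_char_commute[of t] f2_char_f2_add)
    also have "f2_char t s0 = -1"
      using s0(2) by (simp add: f2_char_eq)
    finally show "f2_char t (f2_add s0 s) = - f2_char t s"
      by simp
  qed simp
  finally show ?thesis
    using False by (simp add: sum_negf)
qed

lemma sum_Pow_prod:
  fixes g :: "'a \<Rightarrow> 'b::comm_semiring_1"
  assumes "finite A"
  shows "(\<Sum>B\<in>Pow A. \<Prod>x\<in>B. g x) = (\<Prod>x\<in>A. 1 + g x)"
  using prod_add[OF assms, of g "\<lambda>_. 1"] by (simp add: add.commute)

lemma prod_if_mem: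
  fixes c d :: "'b::comm_monoid_mult"
  assumes "finite B"
  shows "(\<Prod>x\<in>B. if x \<in> s then c else d) = c ^ card (B \<inter> s) * d ^ card (B - s)"
  using assms by (simp add: prod.If_cases Int_def Diff_eq)

lemma power_card_if_subset:
  fixes c :: "'b::comm_semiring_1"
  assumes "finite B"
  shows "c ^ card (B \<inter> s) * 0 ^ card (B - s) = (if B \<subseteq> s then c ^ card B else 0)"
proof (cases "B \<subseteq> s")
  case True
  then have "B - s = {}"
    by blast
  then show ?thesis
    using True by (simp add: Int_absorb2 \<open>B - s = {}\<close>)
next
  case False
  then have "card (B - s) \<noteq> 0"
    using assms by auto
  then show ?thesis
    using False by (simp add: power_0_left)
qed

lemma sum_Pow_neg2_eq_f2_char:
  assumes "finite a"
  shows "(\<Sum>b\<in>Pow a. if b \<subseteq> s then (-2::real) ^ card b else 0) = f2_char a s"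
proof -
  have "(\<Sum>b\<in>Pow a. if b \<subseteq> s then (-2::real) ^ card b else 0)
      = (\<Sum>b\<in>Pow a. \<Prod>x\<in>b. if x \<in> s then -2 else 0)"
    using finite_subset[OF _ assms]
    by (intro sum.cong) (simp_all add: prod_if_mem power_card_if_subset)
  also have "\<dots> = (\<Prod>x\<in>a. 1 + (if x \<in> s then -2 else 0))"
    by (rule sum_Pow_prod[OF assms])
  also have "\<dots> = (\<Prod>x\<in>a. if x \<in> s then -1 else 1)"
    by (intro prod.cong) auto
  finally show ?thesis
    using assms by (simp add: prod_if_mem f2_char_def)
qed

lemma sum_Pow_f2_char:
  assumes "finite a"
  shows "(\<Sum>b\<in>Pow a. (-1) ^ card b * f2_char b s) = (if a \<subseteq> s then 2 ^ card a else 0)"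
proof -
  have "(-1) ^ card b * f2_char b s = (\<Prod>x\<in>b. if x \<in> s then 1 else -1 :: real)"
    if "finite b" for b
  proof -
    have sq: "(-1 :: real) ^ card (b \<inter> s) * (-1) ^ card (b \<inter> s) = 1"
      by (simp flip: power_add)
    have "(-1) ^ card b * f2_char b s
        = ((-1) ^ card (b \<inter> s) * (-1) ^ card (b \<inter> s)) * (-1 :: real) ^ card (b - s)"
      unfolding f2_char_def card_Int_Diff[OF that, of s] power_add by (simp only: mult_ac)
    then show ?thesis
      using that by (simp add: sq prod_if_mem)
  qed
  then have "(\<Sum>b\<in>Pow a. (-1) ^ card b * f2_char b s)
      = (\<Sum>b\<in>Pow a. \<Prod>x\<in>b. if x \<in> s then 1 else -1 :: real)"
    using finite_subset[OF _ assms] by (intro sum.cong) simp_all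
  also have "\<dots> = (\<Prod>x\<in>a. 1 + (if x \<in> s then 1 else -1 :: real))"
    by (rule sum_Pow_prod[OF assms])
  also have "\<dots> = (\<Prod>x\<in>a. if x \<in> s then 2 else 0)"
    by (intro prod.cong) auto
  finally show ?thesis
    using assms by (simp add: prod_if_mem power_card_if_subset)
qed

lemma Gamma_hat_subset_Pow: "\<Gamma> \<subseteq> Pow {..<n} \<Longrightarrow> Gamma_hat \<Gamma> \<subseteq> Pow {..<n}"
  by (auto simp: Gamma_hat_def)

lemma finite_Gamma_hat: "\<Gamma> \<subseteq> Pow {..<n} \<Longrightarrow> finite (Gamma_hat \<Gamma>)"
  using Gamma_hat_subset_Pow by (metis finite_Pow_iff finite_lessThan finite_subset)

(* The hypothesis says that for b \<subseteq> a the characters \<chi>_a0 and \<chi>_b agree on D only if b = a0. *)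
lemma sum_f2_char_mult_subset_indicator:
  assumes D: "linear_code n D" and a: "a \<subseteq> {..<n}" and a0: "a0 \<subseteq> {..<n}"
    and sep: "\<And>b. b \<subseteq> a \<Longrightarrow> f2_add a0 b \<in> dual_code n D \<Longrightarrow> b = a0"
  shows "(\<Sum>s\<in>D. f2_char a0 s * (if a \<subseteq> s then 1 else 0))
           = (if a0 \<subseteq> a then (-1) ^ card a0 * real (card D) / 2 ^ card a else 0)"
proof -
  have fin: "finite a" "finite a0"
    using a a0 finite_subset by blast+
  have "2 ^ card a * (\<Sum>s\<in>D. f2_char a0 s * (if a \<subseteq> s then 1 else 0))
      = (\<Sum>s\<in>D. f2_char a0 s * (if a \<subseteq> s then 2 ^ card a else 0))"
    by (subst sum_distrib_left) (intro sum.cong; simp)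
  also have "\<dots> = (\<Sum>s\<in>D. f2_char a0 s * (\<Sum>b\<in>Pow a. (-1) ^ card b * f2_char b s))"
    by (simp add: sum_Pow_f2_char[OF fin(1)])
  also have "\<dots> = (\<Sum>s\<in>D. \<Sum>b\<in>Pow a. (-1) ^ card b * f2_char (f2_add a0 b) s)"
    unfolding sum_distrib_left using fin
    by (intro sum.cong refl) (simp add: f2_char_f2_add finite_subset[OF _ fin(1)] mult_ac)
  also have "\<dots> = (\<Sum>b\<in>Pow a. (-1) ^ card b * (\<Sum>s\<in>D. f2_char (f2_add a0 b) s))"
    by (simp add: sum.swap[of _ D] sum_distrib_left)
  also have "\<dots> = (\<Sum>b\<in>Pow a. if b = a0 then (-1) ^ card a0 * real (card D) else 0)"
  proof (rule sum.cong)
    fix b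
    assume b: "b \<in> Pow a"
    then have "f2_add a0 b \<subseteq> {..<n}"
      using a a0 by (auto simp: f2_add_def)
    moreover have "f2_add a0 b \<in> dual_code n D \<longleftrightarrow> b = a0"
      using sep b by auto
    ultimately show "(-1) ^ card b * (\<Sum>s\<in>D. f2_char (f2_add a0 b) s)
        = (if b = a0 then (-1) ^ card a0 * real (card D) else 0)"
      by (simp add: sum_f2_char_linear_code[OF D])
  qed simp
  also have "\<dots> = (if a0 \<subseteq> a then (-1) ^ card a0 * real (card D) else 0)"
    using fin by simp
  finally show ?thesis
    by (cases "a0 \<subseteq> a") (simp_all add: eq_divide_eq mult.commute)
qed

lemma sum_f2_char_mult_subset_indicator_Gamma_hat:
  assumes D: "linear_code n D" and \<Gamma>: "\<Gamma> \<subseteq> Pow {..<n}"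
    and sep: "\<forall>\<gamma>1\<in>\<Gamma>. \<forall>\<gamma>2\<in>\<Gamma>. \<forall>e\<in>dual_code n D. e \<subseteq> \<gamma>1 \<union> \<gamma>2 \<longrightarrow> e = {}"
    and a: "a \<in> Gamma_hat \<Gamma>" and a0: "a0 \<in> Gamma_hat \<Gamma>"
  shows "(\<Sum>s\<in>D. f2_char a0 s * (if a \<subseteq> s then 1 else 0))
           = (if a0 \<subseteq> a then (-1) ^ card a0 * real (card D) / 2 ^ card a else 0)"
proof (rule sum_f2_char_mult_subset_indicator[OF D])
  show "a \<subseteq> {..<n}" "a0 \<subseteq> {..<n}"
    using a a0 Gamma_hat_subset_Pow[OF \<Gamma>] by auto
  fix b
  assume "b \<subseteq> a" "f2_add a0 b \<in> dual_code n D"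
  moreover obtain \<gamma>0 \<gamma> where "\<gamma>0 \<in> \<Gamma>" "a0 \<subseteq> \<gamma>0" "\<gamma> \<in> \<Gamma>" "a \<subseteq> \<gamma>"
    using a a0 by (auto simp: Gamma_hat_def)
  moreover have "f2_add a0 b \<subseteq> \<gamma>0 \<union> \<gamma>"
    using \<open>b \<subseteq> a\<close> \<open>a0 \<subseteq> \<gamma>0\<close> \<open>a \<subseteq> \<gamma>\<close> by (auto simp: f2_add_def)
  ultimately have "f2_add a0 b = {}"
    using sep by blast
  then show "b = a0"
    by (simp add: f2_add_eq_empty_iff)
qed

(* Linear independence of the columns of the matrix with rows indexed by R, columns by A and
   entries [a \<subseteq> s]; this is the matrix D for R = C^perp and A = \<Gamma>_hat. *)
definition subset_indicators_indep :: "nat set set \<Rightarrow> nat set set \<Rightarrow> bool" where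
  "subset_indicators_indep R A \<longleftrightarrow>
     (\<forall>f :: nat set \<Rightarrow> real. (\<forall>s\<in>R. (\<Sum>a\<in>A. (if a \<subseteq> s then 1 else 0) * f a) = 0)
        \<longrightarrow> (\<forall>a\<in>A. f a = 0))"

lemma subset_indicators_indep_if_unions_codeword_free:
  assumes D: "linear_code n D" and \<Gamma>: "\<Gamma> \<subseteq> Pow {..<n}"
    and sep: "\<forall>\<gamma>1\<in>\<Gamma>. \<forall>\<gamma>2\<in>\<Gamma>. \<forall>e\<in>dual_code n D. e \<subseteq> \<gamma>1 \<union> \<gamma>2 \<longrightarrow> e = {}"
  shows "subset_indicators_indep D (Gamma_hat \<Gamma>)"
proof (rule ccontr)
  let ?G = "Gamma_hat \<Gamma>"
  assume "\<not> subset_indicators_indep D ?G"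
  then obtain f :: "nat set \<Rightarrow> real"
    where f: "\<forall>s\<in>D. (\<Sum>a\<in>?G. (if a \<subseteq> s then 1 else 0) * f a) = 0" and "\<exists>a\<in>?G. f a \<noteq> 0"
    unfolding subset_indicators_indep_def by blast
  then have "{a \<in> ?G. f a \<noteq> 0} \<noteq> {}" "finite {a \<in> ?G. f a \<noteq> 0}"
    using finite_Gamma_hat[OF \<Gamma>] by auto
  then obtain a0 where a0: "a0 \<in> ?G" "f a0 \<noteq> 0"
    and max: "\<forall>a\<in>{a \<in> ?G. f a \<noteq> 0}. a0 \<subseteq> a \<longrightarrow> a0 = a"
    using finite_has_maximal by blast
  \<comment> \<open>pair the kernel relation with \<chi>_a0; maximality of a0 kills all other terms\<close>
  have "0 = (\<Sum>s\<in>D. f2_char a0 s * (\<Sum>a\<in>?G. (if a \<subseteq> s then 1 else 0) * f a))"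
    using f by simp
  also have "\<dots> = (\<Sum>a\<in>?G. f a * (\<Sum>s\<in>D. f2_char a0 s * (if a \<subseteq> s then 1 else 0)))"
    by (simp add: sum_distrib_left sum.swap[of _ D] mult_ac)
  also have "\<dots> = (\<Sum>a\<in>?G. if a = a0 then f a0 * ((-1) ^ card a0 * real (card D) / 2 ^ card a0) else 0)"
  proof (rule sum.cong)
    fix a
    assume a: "a \<in> ?G"
    show "f a * (\<Sum>s\<in>D. f2_char a0 s * (if a \<subseteq> s then 1 else 0))
        = (if a = a0 then f a0 * ((-1) ^ card a0 * real (card D) / 2 ^ card a0) else 0)"
      using max a
      by (cases "a0 \<subseteq> a") (auto simp: sum_f2_char_mult_subset_indicator_Gamma_hat[OF D \<Gamma> sep a a0(1)])
  qed simp
  also have "\<dots> = f a0 * ((-1) ^ card a0 * real (card D) / 2 ^ card a0)"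
    using a0(1) finite_Gamma_hat[OF \<Gamma>] by simp
  finally have "f a0 * ((-1) ^ card a0 * real (card D) / 2 ^ card a0) = 0"
    by simp
  moreover have "card D \<noteq> 0"
    using finite_linear_code[OF D] D by (auto simp: linear_code_def card_eq_0_iff)
  ultimately show False
    using a0(2) by simp
qed

lemma sum_Gamma_hat_neg2_power:
  assumes \<Gamma>: "\<Gamma> \<subseteq> Pow {..<n}" and "\<gamma> \<in> \<Gamma>" "e \<subseteq> \<gamma>"
  shows "(\<Sum>a\<in>Gamma_hat \<Gamma>. (if a \<subseteq> s then 1 else 0) * (if a \<subseteq> e then (-2::real) ^ card a else 0))
           = f2_char e s - 1"
proof -
  have "finite e"
    using assms finite_subset[of e "{..<n}"] by blast
  have "{a \<in> Gamma_hat \<Gamma>. a \<subseteq> e} = Pow e - {{}}"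
    using assms(2,3) unfolding Gamma_hat_def by blast
  let ?h = "\<lambda>a. if a \<subseteq> s then (-2::real) ^ card a else 0"
  have "(\<Sum>a\<in>Gamma_hat \<Gamma>. (if a \<subseteq> s then 1 else 0) * (if a \<subseteq> e then (-2::real) ^ card a else 0))
      = (\<Sum>a\<in>Gamma_hat \<Gamma>. if a \<subseteq> e then ?h a else 0)"
    by (intro sum.cong) auto
  also have "\<dots> = (\<Sum>a\<in>{a \<in> Gamma_hat \<Gamma>. a \<subseteq> e}. ?h a)"
    by (rule sum.inter_filter[OF finite_Gamma_hat[OF \<Gamma>], symmetric])
  also have "\<dots> = (\<Sum>a\<in>Pow e - {{}}. ?h a)"
    by (simp only: \<open>{a \<in> Gamma_hat \<Gamma>. a \<subseteq> e} = Pow e - {{}}\<close>)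
  also have "\<dots> = f2_char e s - 1"
    using \<open>finite e\<close> by (simp add: sum_diff1 sum_Pow_neg2_eq_f2_char)
  finally show ?thesis .
qed

lemma not_subset_indicators_indep_if_codeword_in_union:
  assumes \<Gamma>: "\<Gamma> \<subseteq> Pow {..<n}" and \<gamma>: "\<gamma>1 \<in> \<Gamma>" "\<gamma>2 \<in> \<Gamma>"
    and e: "e \<in> dual_code n D" "e \<subseteq> \<gamma>1 \<union> \<gamma>2" "e \<noteq> {}"
  shows "\<not> subset_indicators_indep D (Gamma_hat \<Gamma>)"
proof -
  let ?G = "Gamma_hat \<Gamma>"
  define e1 e2 where "e1 = e \<inter> \<gamma>1" and "e2 = e - \<gamma>1"
  have e12: "e1 \<subseteq> \<gamma>1" "e2 \<subseteq> \<gamma>2" "e = f2_add e1 e2" "e1 \<inter> e2 = {}"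
    using e(2) by (auto simp: e1_def e2_def f2_add_def)
  have "finite \<gamma>1" "finite \<gamma>2"
    using \<Gamma> \<gamma> by (auto intro: finite_subset[of _ "{..<n}"])
  then have fin: "finite e1" "finite e2"
    using e12(1,2) finite_subset by auto
  \<comment> \<open>the rows of D pair g e' with \<chi>_e' - 1, and \<chi>_e1 = \<chi>_e2 on D since e \<perp> D\<close>
  define g :: "nat set \<Rightarrow> nat set \<Rightarrow> real"
    where "g e' a = (if a \<subseteq> e' then (-2) ^ card a else 0)" for e' a
  define f where "f a = g e1 a - g e2 a" for a
  have zero: "(\<Sum>a\<in>?G. (if a \<subseteq> s then 1 else 0) * f a) = 0" if "s \<in> D" for s
  proof -
    have "(\<Sum>a\<in>?G. (if a \<subseteq> s then 1 else 0) * f a) = (f2_char e1 s - 1) - (f2_char e2 s - 1)"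
      unfolding f_def g_def right_diff_distrib sum_subtractf
        sum_Gamma_hat_neg2_power[OF \<Gamma> \<gamma>(1) e12(1)] sum_Gamma_hat_neg2_power[OF \<Gamma> \<gamma>(2) e12(2)] ..
    then show ?thesis
      using f2_char_eq_if_f2_add_in_dual_code[OF fin e(1)[unfolded e12(3)] that] by simp
  qed
  have nonzero: "\<exists>a\<in>?G. f a \<noteq> 0"
  proof (cases "e1 = {}")
    case False
    then have "e1 \<in> ?G" "\<not> e1 \<subseteq> e2"
      using e12 \<gamma>(1) by (auto simp: Gamma_hat_def)
    then show ?thesis
      by (intro bexI[of _ e1]) (simp_all add: f_def g_def)
  next
    case True
    then have "e2 \<noteq> {}"
      using e(3) e12(3) by (auto simp: f2_add_def)
    then have "e2 \<in> ?G" "\<not> e2 \<subseteq> e1"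
      using True e12 \<gamma>(2) by (auto simp: Gamma_hat_def)
    then show ?thesis
      by (intro bexI[of _ e2]) (simp_all add: f_def g_def)
  qed
  show ?thesis
    unfolding subset_indicators_indep_def not_all not_imp
    by (rule exI[of _ f]) (use zero nonzero in blast)
qed

lemma subset_indicators_indep_iff_unions_codeword_free:
  assumes "linear_code n D" "\<Gamma> \<subseteq> Pow {..<n}"
  shows "subset_indicators_indep D (Gamma_hat \<Gamma>) \<longleftrightarrow>
         (\<forall>\<gamma>1\<in>\<Gamma>. \<forall>\<gamma>2\<in>\<Gamma>. \<forall>e\<in>dual_code n D. e \<subseteq> \<gamma>1 \<union> \<gamma>2 \<longrightarrow> e = {})"
proof
  assume "subset_indicators_indep D (Gamma_hat \<Gamma>)"
  then show "\<forall>\<gamma>1\<in>\<Gamma>. \<forall>\<gamma>2\<in>\<Gamma>. \<forall>e\<in>dual_code n D. e \<subseteq> \<gamma>1 \<union> \<gamma>2 \<longrightarrow> e = {}"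
    using not_subset_indicators_indep_if_codeword_in_union[OF assms(2)] by blast
qed (rule subset_indicators_indep_if_unions_codeword_free[OF assms])

lemma enum_set_spec: "finite S \<Longrightarrow> set (enum_set S) = S \<and> distinct (enum_set S)"
  unfolding enum_set_def by (rule someI_ex) (rule finite_distinct_list)

lemma D_matrix_full_rank_iff:
  assumes \<Gamma>: "\<Gamma> \<subseteq> Pow {..<n}"
  shows "real_mat_rank (D_matrix n C \<Gamma>) = card (Gamma_hat \<Gamma>) \<longleftrightarrow>
    subset_indicators_indep (dual_code n C) (Gamma_hat \<Gamma>)"
proof -
  define rs cs where "rs = enum_set (dual_code n C - {{}})" and "cs = enum_set (Gamma_hat \<Gamma>)"
  have rs: "set rs = dual_code n C - {{}}"
    using enum_set_spec[of "dual_code n C - {{}}"] finite_linear_code[OF linear_code_dual_code, of n C]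
    unfolding rs_def by simp
  have cs: "set cs = Gamma_hat \<Gamma>" "distinct cs"
    using enum_set_spec[OF finite_Gamma_hat[OF \<Gamma>]] unfolding cs_def by auto
  have "real_mat_rank (D_matrix n C \<Gamma>) = vec_space.rank (length rs)
      (mat (length rs) (length cs) (\<lambda>(i, j). (\<lambda>s a. if a \<subseteq> s then 1 else (0::real)) (rs ! i) (cs ! j)))"
    by (simp add: real_mat_rank_def D_matrix_def rs_def cs_def Let_def)
  moreover have "card (Gamma_hat \<Gamma>) = length cs"
    using distinct_card[OF cs(2)] cs(1) by simp
  moreover have "(\<forall>s\<in>dual_code n C - {{}}. (\<Sum>a\<in>Gamma_hat \<Gamma>. (if a \<subseteq> s then 1 else 0) * f a) = 0)
      \<longleftrightarrow> (\<forall>s\<in>dual_code n C. (\<Sum>a\<in>Gamma_hat \<Gamma>. (if a \<subseteq> s then 1 else 0) * f a) = (0::real))"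
    for f
  proof -
    have "(\<Sum>a\<in>Gamma_hat \<Gamma>. (if a \<subseteq> {} then 1 else 0) * f a) = 0"
      by (rule sum.neutral) (auto simp: Gamma_hat_def)
    then show ?thesis
      by blast
  qed
  ultimately show ?thesis
    using full_rank_mat_of_lists_iff[OF cs(2), of rs "\<lambda>s a. if a \<subseteq> s then 1 else (0::real)"]
    unfolding rs cs(1) subset_indicators_indep_def by simp
qed

theorem theorem3:
  fixes n :: nat and C :: "nat set set" and H :: "nat set list" and \<Gamma> :: "nat set set"
  assumes "linear_code n C"
    and "is_parity_check n C H"
    and "\<Gamma> \<subseteq> Pow {..<n}"
  shows "real_mat_rank (D_matrix n C \<Gamma>) = card (Gamma_hat \<Gamma>) \<longleftrightarrow>
         (\<forall>\<gamma>1\<in>\<Gamma>. \<forall>\<gamma>2\<in>\<Gamma>. \<gamma>1 \<union> \<gamma>2 \<in> DeltaD n H)"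
proof -
  have dual_dual: "dual_code n (dual_code n C) = dual_code n (set H)"
    using assms(2) dual_code_f2_span by (metis is_parity_check_def)
  have "\<gamma>1 \<union> \<gamma>2 \<in> DeltaD n H \<longleftrightarrow>
      (\<forall>e\<in>dual_code n (dual_code n C). e \<subseteq> \<gamma>1 \<union> \<gamma>2 \<longrightarrow> e = {})"
    if "\<gamma>1 \<in> \<Gamma>" "\<gamma>2 \<in> \<Gamma>" for \<gamma>1 \<gamma>2
    using that assms(3) by (auto simp: DeltaD_iff dual_dual)
  then show ?thesis
    using D_matrix_full_rank_iff[OF assms(3)]
      subset_indicators_indep_iff_unions_codeword_free[OF linear_code_dual_code assms(3)]
    by simp
qed

end
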